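(* Consider $n$ processes running the Median-based Byzantine Agreement algorithm (described in the context) with any parameter $\alpha$ satisfying $0 \le \alpha < \lceil n/6 \rceil - 1$, in a system in which fewer than $\lfloor n/3 \rfloor$ processes are Byzantine. Then the algorithm satisfies interval validity: letting $T$ be the multiset of inputs of the non-faulty processes, every value $d$ output by a non-faulty process satisfies $d \in \{\min T, \dots, \max T\}$.
   Context: System model: $n$ processes $p_1,\dots,p_n$ communicate over a complete network in fully synchronous rounds (every message sent in a round is delivered before the next round); the receiver of a message knows its sender. A Byzantine (faulty) process may deviate arbitrarily from the protocol, e.g. send different messages to different processes or omit messages; the other processes are non-faulty. Each process $p_i$ has an input value $v_i$ from a totally ordered domain $V$ (integers); $\bot \notin V$ is a special default value. WeakMVBA: a Byzantine agreement protocol (tolerating the given number of Byzantine processes) in which each process has an input and all non-faulty processes terminate with: (consistency) the same decision value; (weak validity) if all non-faulty processes have the same input $v$, the decision is $v$; otherwise the decision is some value of $V\cup\{\bot\}$. Median-based Byzantine Agreement algorithm with parameter $\alpha$, run by a process with input $v$: (1) send $v$ to all processes (including itself); initialize an array $A[1..n]$ to $\bot$ and set $A[i]$ to the value received from $p_i$. (2) For each $i=1,\dots,n$, in parallel, run an instance of WeakMVBA in which this process uses input $A[i]$, and replace $A[i]$ by the decision of that instance. (3) Output select\_value$(A)$, defined as: delete all $\bot$ entries of $A$ to obtain a list $A_{\not\bot}$ of length $k$; let $C[u]$ be the number of occurrences of $u$ in $A_{\not\bot}$ and let $m$ be a value maximizing $C[m]$ (ties broken by a fixed deterministic rule); if $C[m]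 \ge \lfloor k/3\rfloor + 1 + \alpha$, output $m$; otherwise sort $A_{\not\bot}$ in nondecreasing order and output its median element (the entry at position $\lfloor k/2 \rfloor$; for even $k$ the lower of the two middle values). *)

theory Defs
  imports Complex_Main
begin

text \<open>Processes are p_1..p_n, indexed by {1..n}. Values V are integers, the default
  value bot is None. An array A[1..n] over V plus bot is a function nat => int option.\<close>

definition non_bot_list :: "nat \<Rightarrow> (nat \<Rightarrow> int option) \<Rightarrow> int list" where
  "non_bot_list n A = map the (filter (\<lambda>x. x \<noteq> None) (map A [1..<n+1]))"

definition is_mode_rule :: "(int list \<Rightarrow> int) \<Rightarrow> bool" where
  "is_mode_rule pick \<longleftrightarrow>
     (\<forall>xs. xs \<noteq> [] \<longrightarrow> pick xs \<in> set xs \<and> (\<forall>u. count_list xs u \<le> count_list xs (pick xs)))"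

text \<open>select_value(A) with parameter alpha and tie-breaking rule pick. The median is
  the lower middle element of the sorted list (0-indexed position (k-1) div 2).\<close>
definition select_value :: "(int list \<Rightarrow> int) \<Rightarrow> int \<Rightarrow> nat \<Rightarrow> (nat \<Rightarrow> int option) \<Rightarrow> int" where
  "select_value pick \<alpha> n A =
     (let L = non_bot_list n A; k = length L; m = pick L in
      if int (count_list L m) \<ge> int (k div 3) + 1 + \<alpha> then m
      else sort L ! ((k - 1) div 2))"

end

theory Submission
  imports Defs
begin

text \<open>Every correct process sent its input to all correct processes, so by weak validity
  the instance of a correct process decides that input. Hence only the fewer than n/3
  instances of Byzantine processes can put entries outside the range of the correct inputs
  into the decided array, and these are fewer than a third of its non-bot entries. Such
  outliers can neither reach the frequency threshold nor occupy the median position.\<close>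

lemma sorted_nth_ge_if_few_below:
  fixes S :: "'a::linorder list"
  assumes "sorted S" "p < length S" "length (filter (\<lambda>x. x < lo) S) \<le> p"
  shows "lo \<le> S ! p"
proof (rule ccontr)
  assume "\<not> lo \<le> S ! p"
  then have "{0..p} \<subseteq> {i. i < length S \<and> S ! i < lo}"
    using assms(1,2) sorted_nth_mono[OF assms(1)] by fastforce
  then have "card {0..p} \<le> card {i. i < length S \<and> S ! i < lo}"
    by (intro card_mono) auto
  then show False using assms(3) by (simp add: length_filter_conv_card)
qed

lemma sorted_nth_le_if_few_above:
  fixes S :: "'a::linorder list"
  assumes "sorted S" "p < length S" "length (filter (\<lambda>x. hi < x) S) < length S - p"
  shows "S ! p \<le> hi"
proof (rule ccontr)
  assume "\<not> S ! p \<le> hi"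
  then have "{p..<length S} \<subseteq> {i. i < length S \<and> hi < S ! i}"
    using assms(1,2) sorted_nth_mono[OF assms(1)] by fastforce
  then have "card {p..<length S} \<le> card {i. i < length S \<and> hi < S ! i}"
    by (intro card_mono) auto
  then show False using assms(3) by (simp add: length_filter_conv_card)
qed

lemma lower_median_between:
  fixes L :: "'a::linorder list"
  assumes "2 * length (filter (\<lambda>x. x < lo) L) < length L"
    and "2 * length (filter (\<lambda>x. hi < x) L) < length L"
  shows "lo \<le> sort L ! ((length L - 1) div 2) \<and> sort L ! ((length L - 1) div 2) \<le> hi"
proof -
  let ?p = "(length L - 1) div 2"
  have p: "?p < length (sort L)" using assms(1) by simp
  have "lo \<le> sort L ! ?p"
    by (rule sorted_nth_ge_if_few_below[OF sorted_sort p]) (use assms(1) in \<open>simp add: filter_sort\<close>)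
  moreover have "sort L ! ?p \<le> hi"
    by (rule sorted_nth_le_if_few_above[OF sorted_sort p]) (use assms(2) in \<open>simp add: filter_sort\<close>)
  ultimately show ?thesis ..
qed

lemma count_list_le_length_filter:
  "P x \<Longrightarrow> count_list xs x \<le> length (filter P xs)"
  by (induction xs) auto

lemma frequent_between:
  fixes L :: "'a::linorder list"
  assumes "length (filter (\<lambda>x. x < lo) L) < count_list L m"
    and "length (filter (\<lambda>x. hi < x) L) < count_list L m"
  shows "lo \<le> m \<and> m \<le> hi"
  using assms count_list_le_length_filter[of "\<lambda>x. x < lo" m L]
    count_list_le_length_filter[of "\<lambda>x. hi < x" m L]
  by (meson leD not_le)

lemma select_value_between:
  assumes "0 \<le> \<alpha>"
    and below: "length (filter (\<lambda>x. x < lo) (non_bot_list n A)) \<le> b"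
    and above: "length (filter (\<lambda>x. hi < x) (non_bot_list n A)) \<le> b"
    and few: "3 * b < length (non_bot_list n A)"
  shows "lo \<le> select_value pick \<alpha> n A \<and> select_value pick \<alpha> n A \<le> hi"
proof -
  define L where "L = non_bot_list n A"
  have "lo \<le> pick L \<and> pick L \<le> hi"
    if "int (length L div 3) + 1 + \<alpha> \<le> int (count_list L (pick L))"
    using that assms unfolding L_def[symmetric] by (intro frequent_between[where L = L]) linarith+
  moreover have "lo \<le> sort L ! ((length L - 1) div 2) \<and> sort L ! ((length L - 1) div 2) \<le> hi"
    using below above few unfolding L_def[symmetric] by (intro lower_median_between) linarith+
  ultimately show ?thesis
    unfolding select_value_def Let_def L_def[symmetric] by auto
qed

lemma filter_map_the_non_None:
  "filter P (map the (filter (\<lambda>x. x \<noteq> None) xs)) =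
   map the (filter (\<lambda>y. y \<noteq> None \<and> P (the y)) xs)"
  by (induction xs) auto

lemma length_filter_non_bot_list:
  "length (filter P (non_bot_list n A)) = card {i\<in>{1..n}. A i \<noteq> None \<and> P (the (A i))}"
proof -
  have "length (filter P (non_bot_list n A)) =
        length (filter (\<lambda>i. A i \<noteq> None \<and> P (the (A i))) [1..<n+1])"
    unfolding non_bot_list_def filter_map_the_non_None by (simp add: filter_map comp_def)
  also have "\<dots> = card (set (filter (\<lambda>i. A i \<noteq> None \<and> P (the (A i))) [1..<n+1]))"
    by (rule distinct_card[symmetric]) simp
  also have "set (filter (\<lambda>i. A i \<noteq> None \<and> P (the (A i))) [1..<n+1]) =
             {i\<in>{1..n}. A i \<noteq> None \<and> P (the (A i))}"
    by auto
  finally show ?thesis .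
qed

lemma select_value_between_if_faulty_minority:
  assumes "0 \<le> \<alpha>" "F \<subseteq> {1..n}" "3 * card F < n"
    and correct: "\<And>i. i \<in> {1..n} - F \<Longrightarrow> \<exists>x. A i = Some x \<and> lo \<le> x \<and> x \<le> hi"
  shows "lo \<le> select_value pick \<alpha> n A \<and> select_value pick \<alpha> n A \<le> hi"
proof -
  define B where "B = {i\<in>F. A i \<noteq> None}"
  have finF: "finite F" using assms(2) finite_subset by blast
  have outliers: "length (filter P (non_bot_list n A)) \<le> card B"
    if "\<And>x. lo \<le> x \<Longrightarrow> x \<le> hi \<Longrightarrow> \<not> P x" for P
  proof -
    have "{i\<in>{1..n}. A i \<noteq> None \<and> P (the (A i))} \<subseteq> B"
      using correct that unfolding B_def by fastforce
    then show ?thesis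
      unfolding length_filter_non_bot_list B_def using finF by (intro card_mono) auto
  qed
  have "{i\<in>{1..n}. A i \<noteq> None} = ({1..n} - F) \<union> B"
    using correct assms(2) unfolding B_def by fastforce
  moreover have "card (({1..n} - F) \<union> B) = card ({1..n} - F) + card B"
    using finF unfolding B_def by (intro card_Un_disjoint) auto
  ultimately have "length (non_bot_list n A) = card ({1..n} - F) + card B"
    using length_filter_non_bot_list[of "\<lambda>_. True" n A] by simp
  moreover have "card B \<le> card F" unfolding B_def using finF by (intro card_mono) auto
  moreover have "card ({1..n} - F) = n - card F" using assms(2) finF by (simp add: card_Diff_subset)
  ultimately have "3 * card B < length (non_bot_list n A)" using assms(3) by linarith
  then show ?thesis
    using select_value_between[OF assms(1)] outliers by (meson not_le)
qed

theorem lemma2: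
  fixes n :: nat and \<alpha> :: int
    and F :: "nat set"                       \<comment> \<open>Byzantine processes\<close>
    and v :: "nat \<Rightarrow> int"                    \<comment> \<open>inputs\<close>
    and recv :: "nat \<Rightarrow> nat \<Rightarrow> int option"   \<comment> \<open>recv j i: value p_j received from p_i in step 1 (None = bot)\<close>
    and dec :: "nat \<Rightarrow> nat \<Rightarrow> int option"    \<comment> \<open>dec j i: decision of p_j in WeakMVBA instance i\<close>
    and pick :: "int list \<Rightarrow> int"            \<comment> \<open>fixed deterministic tie-breaking rule\<close>
  assumes alpha_nonneg: "0 \<le> \<alpha>"
    and alpha_bound: "\<alpha> < \<lceil>real n / 6\<rceil> - 1"
    and F_sub: "F \<subseteq> {1..n}"
    and few_faulty: "card F < n div 3"
    and pick: "is_mode_rule pick"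
    and step1: "\<forall>j\<in>{1..n} - F. \<forall>i\<in>{1..n} - F. recv j i = Some (v i)"
    and consistency: "\<forall>i\<in>{1..n}. \<forall>j\<in>{1..n} - F. \<forall>j'\<in>{1..n} - F. dec j i = dec j' i"
    and weak_validity: "\<forall>i\<in>{1..n}. \<forall>x.
          (\<forall>j\<in>{1..n} - F. recv j i = Some x) \<longrightarrow> (\<forall>j\<in>{1..n} - F. dec j i = Some x)"
  shows "\<forall>j\<in>{1..n} - F.
           Min (v ` ({1..n} - F)) \<le> select_value pick \<alpha> n (dec j) \<and>
           select_value pick \<alpha> n (dec j) \<le> Max (v ` ({1..n} - F))"
proof
  fix j assume j: "j \<in> {1..n} - F"
  have "\<exists>x. dec j i = Some x \<and> Min (v ` ({1..n} - F)) \<le> x \<and> x \<le> Max (v ` ({1..n} - F))"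
    if "i \<in> {1..n} - F" for i
  proof -
    have "dec j i = Some (v i)" using weak_validity step1 that j by blast
    then show ?thesis using that by auto
  qed
  moreover have "3 * card F < n" using few_faulty by linarith
  ultimately show "Min (v ` ({1..n} - F)) \<le> select_value pick \<alpha> n (dec j) \<and>
           select_value pick \<alpha> n (dec j) \<le> Max (v ` ({1..n} - F))"
    using select_value_between_if_faulty_minority[OF alpha_nonneg F_sub] by blast
qed

end
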